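(* Let $r\ge 3$ and $k\ge 2r+13$ be integers, and $m=\lfloor (k-1)/2\rfloor$. Let $\mathcal G$ be a nonempty $r$-graph containing no Berge-path of length $k$, in which every vertex has degree at least $\binom{m}{r-1}$. Then there is a longest Berge-path $u_1,f_1,u_2,\dots,f_l,u_{l+1}$ in $\mathcal G$, with set of defining hyperedges $\mathcal F=\{f_1,\dots,f_l\}$, such that $|N_{\mathcal G\setminus\mathcal F}(u_1)|\ge m$ and $|N_{\mathcal G\setminus\mathcal F}(u_{l+1})|\ge m$.
   Context: An $r$-graph is a simple $r$-uniform hypergraph; the degree of a vertex is the number of hyperedges containing it. A Berge-path of length $t$ is an alternating sequence $v_1,e_1,v_2,\dots,e_t,v_{t+1}$ of $t+1$ distinct vertices (the defining vertices) and $t$ distinct hyperedges (the defining hyperedges) with $\{v_i,v_{i+1}\}\subseteq e_i$ for all $i$. For a hypergraph $\mathcal K$ and vertex $v$, $N_{\mathcal K}(v)=\{u\neq v: \exists h\in E(\mathcal K),\ \{u,v\}\subseteq h\}$. $\mathcal G\setminus\mathcal F$ denotes the hypergraph on $V(\mathcal G)$ with hyperedge set $E(\mathcal G)\setminus\mathcal F$. *)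

theory Defs
  imports Main
begin

definition rgraph :: "nat \<Rightarrow> 'a set \<Rightarrow> 'a set set \<Rightarrow> bool" where
  "rgraph r V E \<longleftrightarrow> finite V \<and> (\<forall>e\<in>E. e \<subseteq> V \<and> card e = r)"

definition hdegree :: "'a set set \<Rightarrow> 'a \<Rightarrow> nat" where
  "hdegree E v = card {e \<in> E. v \<in> e}"

text \<open>Berge-path given by defining vertices vs (v_1..v_{t+1}) and defining hyperedges es (e_1..e_t);
  its length is length es.\<close>
definition berge_path :: "'a set set \<Rightarrow> 'a list \<Rightarrow> 'a set list \<Rightarrow> bool" where
  "berge_path E vs es \<longleftrightarrow>
     length vs = length es + 1 \<and> distinct vs \<and> distinct es \<and> set es \<subseteq> E \<and>
     (\<forall>i < length es. {vs ! i, vs ! (i+1)} \<subseteq> es ! i)"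

definition longest_berge_path :: "'a set set \<Rightarrow> 'a list \<Rightarrow> 'a set list \<Rightarrow> bool" where
  "longest_berge_path E vs es \<longleftrightarrow> berge_path E vs es \<and>
     (\<forall>vs' es'. berge_path E vs' es' \<longrightarrow> length es' \<le> length es)"

definition hnbhd :: "'a set \<Rightarrow> 'a set set \<Rightarrow> 'a \<Rightarrow> 'a set" where
  "hnbhd V E v = {u \<in> V. u \<noteq> v \<and> (\<exists>h\<in>E. {u, v} \<subseteq> h)}"

end

theory Submission
  imports Defs
begin

text \<open>A Posa rotation of a longest Berge-path \<open>u\<^sub>1, f\<^sub>1, \<dots>, u\<^sub>l\<^sub>+\<^sub>1\<close> at a defining hyperedge
  \<open>f\<^sub>i \<ni> u\<^sub>1\<close> gives the longest path \<open>u\<^sub>i, f\<^sub>i\<^sub>-\<^sub>1, \<dots>, u\<^sub>1, f\<^sub>i, u\<^sub>i\<^sub>+\<^sub>1, \<dots>\<close> with the same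
  hyperedge set \<open>F\<close> and the same last vertex. A vertex of degree at least \<open>C(m, r-1)\<close> with fewer
  than \<open>m\<close> neighbours in \<open>\<G> \<setminus> F\<close> lies in at least \<open>c = C(m-1, r-2)\<close> hyperedges of \<open>F\<close>.
  So if no rotation brought a vertex with \<open>m\<close> such neighbours to the front, \<open>u\<^sub>1\<close> would give at least \<open>c\<close> rotation
  starts, each in at least \<open>c\<close> hyperedges of \<open>F\<close>, and double counting would give
  \<open>c\<^sup>2 \<le> r l < r k\<close>, which fails for \<open>k \<ge> 2r + 13\<close>. Doing this at one end and then at the
  other end of the reversed path yields the claim.\<close>

lemma le_binomial: "0 < j \<Longrightarrow> j < n \<Longrightarrow> n \<le> n choose j"
proof (induction n arbitrary: j)
  case 0 then show ?case by simp
next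
  case (Suc n)
  show ?case
  proof (cases "j = 1")
    case False
    then obtain j' where j: "j = Suc j'" "0 < j'" "j' < n" using Suc.prems
      by (cases j) auto
    have "n \<le> n choose j'" using Suc.IH j by simp
    moreover have "0 < n choose Suc j'" using j by simp
    ultimately show ?thesis unfolding j(1) binomial_Suc_Suc by linarith
  qed simp
qed

lemma binomial_square_gt:
  fixes r m :: nat
  assumes "3 \<le> r" "r + 6 \<le> m"
  shows "r * (2 * m + 1) < ((m - 1) choose (r - 2))\<^sup>2"
proof (cases "r = 3")
  case True
  obtain a where "m = a + 9" using assms True by (intro that[of "m - 9"]) simp
  then show ?thesis using True by (simp add: power2_eq_square algebra_simps)
next
  case False
  have binom: "(m - 1) choose (r - 2) = ((m - 2) choose (r - 3)) + ((m - 2) choose (r - 2))"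
    using assms False binomial_Suc_Suc[of "m - 2" "r - 3"]
    by (simp add: Suc_diff_Suc numeral_2_eq_2 numeral_3_eq_3)
  have "m - 2 \<le> (m - 2) choose (r - 3)" "m - 2 \<le> (m - 2) choose (r - 2)"
    using assms False by (intro le_binomial; linarith)+
  then have c: "2 * m - 4 \<le> (m - 1) choose (r - 2)" using binom by linarith
  obtain a where a: "m = a + 10" using assms False by (intro that[of "m - 10"]) simp
  have "r * (2 * m + 1) \<le> (m - 6) * (2 * m + 1)" using assms by (intro mult_right_mono) simp_all
  also have "\<dots> < (2 * m - 4)\<^sup>2" unfolding a by (simp add: power2_eq_square algebra_simps)
  also have "\<dots> \<le> ((m - 1) choose (r - 2))\<^sup>2" using c by (simp add: power_mono)
  finally show ?thesis .
qed

lemma berge_path_take: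
  assumes "berge_path E vs es" "j \<le> length es"
  shows "berge_path E (take (Suc j) vs) (take j es)"
  using assms unfolding berge_path_def
  by (auto simp: min_def dest: in_set_takeD)

lemma berge_path_drop:
  assumes "berge_path E vs es" "j \<le> length es"
  shows "berge_path E (drop j vs) (drop j es)"
  using assms unfolding berge_path_def
  by (auto simp: add.assoc dest: in_set_dropD)

lemma berge_path_append:
  assumes us: "berge_path E us fs" and ws: "berge_path E ws gs"
    and e: "e \<in> E" "last us \<in> e" "hd ws \<in> e" "e \<notin> set fs" "e \<notin> set gs"
    and disj: "set us \<inter> set ws = {}" "set fs \<inter> set gs = {}"
  shows "berge_path E (us @ ws) (fs @ e # gs)"
proof -
  have Lu: "length us = length fs + 1" and Lw: "length ws = length gs + 1"
    using us ws by (simp_all add: berge_path_def)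
  have "{(us @ ws) ! i, (us @ ws) ! (i + 1)} \<subseteq> (fs @ e # gs) ! i"
    if i: "i < length fs + 1 + length gs" for i
  proof -
    consider "i < length fs" | "i = length fs" | j where "i = length fs + 1 + j" "j < length gs"
      using i by (metis add_less_imp_less_left le_Suc_ex linorder_neqE_nat Suc_eq_plus1 Suc_le_eq)
    then show ?thesis
    proof cases
      case 1
      then show ?thesis using us Lu by (simp add: berge_path_def nth_append)
    next
      case 2
      have "us ! length fs = last us" using Lu last_conv_nth[of us] by fastforce
      moreover have "ws ! 0 = hd ws" using Lw hd_conv_nth[of ws] by fastforce
      ultimately show ?thesis using 2 e Lu by (simp add: nth_append)
    next
      case 3
      then show ?thesis using ws Lu
        by (simp add: berge_path_def nth_append add.assoc[symmetric])
    qed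
  qed
  then show ?thesis using us ws e disj Lu Lw by (auto simp: berge_path_def)
qed

lemma berge_path_rev:
  assumes "berge_path E vs es"
  shows "berge_path E (rev vs) (rev es)"
proof -
  have L: "length vs = length es + 1" using assms by (simp add: berge_path_def)
  have "{rev vs ! i, rev vs ! (i + 1)} \<subseteq> rev es ! i" if i: "i < length es" for i
  proof -
    have "rev vs ! i = vs ! (length es - 1 - i + 1)" "rev vs ! (i + 1) = vs ! (length es - 1 - i)"
      using i L by (simp_all add: rev_nth Suc_diff_Suc)
    then show ?thesis using assms i by (auto simp: berge_path_def rev_nth)
  qed
  then show ?thesis using assms by (simp add: berge_path_def)
qed

lemma berge_path_rotate:
  assumes bp: "berge_path E vs es" and i: "i < length es" and start: "hd vs \<in> es ! i"
  shows "\<exists>vs' es'. berge_path E vs' es' \<and> set es' = set es \<and> length es' = length es \<and>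
           hd vs' = vs ! i \<and> last vs' = last vs"
proof -
  have L: "length vs = length es + 1" and dv: "distinct vs" and de: "distinct es"
    and EE: "set es \<subseteq> E" using bp by (auto simp: berge_path_def)
  define us where "us = rev (take (Suc i) vs)"
  define ws where "ws = drop (Suc i) vs"
  define es' where "es' = rev (take i es) @ es ! i # drop (Suc i) es"
  have distinct_split: "distinct (take i es @ es ! i # drop (Suc i) es)"
    using de by (simp only: id_take_nth_drop[OF i, symmetric])
  have "berge_path E (us @ ws) es'"
    unfolding es'_def
  proof (rule berge_path_append)
    show "berge_path E us (rev (take i es))"
      unfolding us_def using bp i by (intro berge_path_rev berge_path_take) simp_all
    show "berge_path E ws (drop (Suc i) es)"
      unfolding ws_def using bp i by (intro berge_path_drop) simp_all
    show "last us \<in> es ! i" unfolding us_def using start L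
      by (simp add: last_rev hd_take)
    show "hd ws \<in> es ! i" unfolding ws_def using bp i L
      by (auto simp: berge_path_def hd_drop_conv_nth)
    show "es ! i \<in> E" using EE i by auto
    show "set us \<inter> set ws = {}" unfolding us_def ws_def using dv
      by (simp add: set_take_disj_set_drop_if_distinct)
    show "es ! i \<notin> set (rev (take i es))" "es ! i \<notin> set (drop (Suc i) es)"
      "set (rev (take i es)) \<inter> set (drop (Suc i) es) = {}"
      using distinct_split by auto
  qed
  moreover have "set es' = set es" unfolding es'_def by (subst (2) id_take_nth_drop[OF i]) auto
  moreover have "length es' = length es" unfolding es'_def using i by simp
  moreover have "hd (us @ ws) = vs ! i" unfolding us_def using i L
    by (simp add: take_Suc_conv_app_nth)
  moreover have "last (us @ ws) = last vs" unfolding ws_def using i L by simp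
  ultimately show ?thesis by blast
qed

lemma berge_path_vertices_subset:
  assumes bp: "berge_path E vs es" and nonempty: "es \<noteq> []" and rg: "rgraph r V E"
  shows "set vs \<subseteq> V"
proof
  fix v assume "v \<in> set vs"
  then obtain j where j: "j < length vs" "v = vs ! j" by (auto simp: in_set_conv_nth)
  have L: "length vs = length es + 1" using bp by (simp add: berge_path_def)
  define i where "i = min j (length es - 1)"
  have i: "i < length es" "j = i \<or> j = i + 1"
    using j L nonempty unfolding i_def min_def by (auto simp flip: length_greater_0_conv)
  then have "v \<in> es ! i" using bp j by (auto simp: berge_path_def)
  moreover have "es ! i \<in> E" using bp i by (auto simp: berge_path_def)
  ultimately show "v \<in> V" using rg by (auto simp: rgraph_def)
qed

lemma hdegree_le_binomial_hnbhd:
  assumes rg: "rgraph r V E"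
  shows "hdegree E x \<le> card (hnbhd V E x) choose (r - 1)"
proof -
  have fin: "finite (hnbhd V E x)" using rg by (simp add: rgraph_def hnbhd_def)
  have "hdegree E x \<le> card {S. S \<subseteq> hnbhd V E x \<and> card S = r - 1}"
    unfolding hdegree_def
  proof (rule card_inj_on_le[where f = "\<lambda>e. e - {x}"])
    show "inj_on (\<lambda>e. e - {x}) {e \<in> E. x \<in> e}"
      by (rule inj_onI) (metis (no_types, lifting) insert_Diff mem_Collect_eq)
    show "(\<lambda>e. e - {x}) ` {e \<in> E. x \<in> e} \<subseteq> {S. S \<subseteq> hnbhd V E x \<and> card S = r - 1}"
      using rg by (auto simp: rgraph_def hnbhd_def card_Diff_singleton_if)
  qed (use fin in simp)
  also have "\<dots> = card (hnbhd V E x) choose (r - 1)" using fin by (rule n_subsets)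
  finally show ?thesis .
qed

lemma rgraph_Diff: "rgraph r V E \<Longrightarrow> rgraph r V (E - F)"
  by (simp add: rgraph_def)

lemma card_incident_ge_if_small_hnbhd:
  assumes rg: "rgraph r V E" and F: "F \<subseteq> E" and r: "2 \<le> r"
    and deg: "m choose (r - 1) \<le> hdegree E x"
    and small: "card (hnbhd V (E - F) x) < m"
  shows "(m - 1) choose (r - 2) \<le> card {f \<in> F. x \<in> f}"
proof -
  have fE: "finite E" using rg by (simp add: rgraph_def finite_subset[of E "Pow V"] subset_iff)
  have split: "{e \<in> E. x \<in> e} = {e \<in> F. x \<in> e} \<union> {e \<in> E - F. x \<in> e}" using F by auto
  have "hdegree E x = card {f \<in> F. x \<in> f} + hdegree (E - F) x"
    unfolding hdegree_def split by (rule card_Un_disjoint) (use fE F in \<open>auto intro: finite_subset\<close>)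
  moreover have "hdegree (E - F) x \<le> card (hnbhd V (E - F) x) choose (r - 1)"
    using rg by (intro hdegree_le_binomial_hnbhd rgraph_Diff)
  moreover have "\<dots> \<le> (m - 1) choose (r - 1)"
    using small by (intro binomial_right_mono) linarith
  moreover have "m choose (r - 1) = ((m - 1) choose (r - 2)) + ((m - 1) choose (r - 1))"
    using small r binomial_Suc_Suc[of "m - 1" "r - 2"] by (simp add: Suc_diff_Suc numeral_2_eq_2)
  ultimately show ?thesis using deg by linarith
qed

lemma sum_card_incident_le:
  assumes "finite R" "finite F" "\<forall>f\<in>F. finite f \<and> card f \<le> r"
  shows "(\<Sum>y\<in>R. card {f \<in> F. y \<in> f}) \<le> r * card F"
proof -
  have "(\<Sum>y\<in>R. card {f \<in> F. y \<in> f}) = (\<Sum>y\<in>R. \<Sum>f\<in>F. of_bool (y \<in> f))"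
    using assms by (simp add: Int_def)
  also have "\<dots> = (\<Sum>f\<in>F. \<Sum>y\<in>R. of_bool (y \<in> f))" by (rule sum.swap)
  also have "\<dots> = (\<Sum>f\<in>F. card (R \<inter> f))" using assms by (simp add: Int_def)
  also have "\<dots> \<le> (\<Sum>f\<in>F. r)" using assms by (intro sum_mono) (meson card_mono inf_le2 le_trans)
  also have "\<dots> = r * card F" by simp
  finally show ?thesis .
qed

lemma card_left_ends_incident:
  assumes "berge_path E vs es"
  shows "card ((!) vs ` {i. i < length es \<and> x \<in> es ! i}) = card {f \<in> set es. x \<in> f}"
proof -
  have L: "length vs = length es + 1" and dv: "distinct vs" and de: "distinct es"
    using assms by (auto simp: berge_path_def)
  let ?I = "{i. i < length es \<and> x \<in> es ! i}"
  have "card ((!) vs ` ?I) = card ?I"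
    using dv L by (intro card_image) (auto simp: inj_on_def nth_eq_iff_index_eq)
  also have "\<dots> = card ((!) es ` ?I)"
    using de by (intro card_image[symmetric]) (auto simp: inj_on_def nth_eq_iff_index_eq)
  also have "(!) es ` ?I = {f \<in> set es. x \<in> f}" by (auto simp: in_set_conv_nth)
  finally show ?thesis .
qed

lemma ex_rich_rotation_start:
  assumes rg: "rgraph r V E" and deg: "\<forall>v\<in>V. m choose (r - 1) \<le> hdegree E v"
    and bp: "berge_path E vs es" and nonempty: "es \<noteq> []" and r: "2 \<le> r"
    and few_edges: "r * length es < ((m - 1) choose (r - 2))\<^sup>2"
  shows "\<exists>i<length es. hd vs \<in> es ! i \<and> m \<le> card (hnbhd V (E - set es) (vs ! i))"
proof (rule ccontr)
  assume no_rich: "\<not> ?thesis"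
  define c where "c = (m - 1) choose (r - 2)"
  define R where "R = (!) vs ` {i. i < length es \<and> hd vs \<in> es ! i}"
  have L: "length vs = length es + 1" and de: "distinct es" and EE: "set es \<subseteq> E"
    using bp by (auto simp: berge_path_def)
  have RV: "R \<subseteq> V" unfolding R_def using berge_path_vertices_subset[OF bp nonempty rg] L by auto
  have poor: "c \<le> card {f \<in> set es. y \<in> f}" if "y \<in> R" for y
  proof -
    obtain i where "i < length es" "hd vs \<in> es ! i" "y = vs ! i" using \<open>y \<in> R\<close> R_def by auto
    then have "card (hnbhd V (E - set es) y) < m" using no_rich by auto
    then show ?thesis unfolding c_def
      using rg EE r deg RV \<open>y \<in> R\<close> by (intro card_incident_ge_if_small_hnbhd) auto
  qed
  have "vs \<noteq> []" using L by auto
  then have "hd vs = vs ! 0" by (rule hd_conv_nth)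
  moreover have "vs ! 0 \<in> es ! 0" using bp nonempty by (auto simp: berge_path_def)
  ultimately have "hd vs \<in> R" unfolding R_def using nonempty by force
  then have "c \<le> card R" using poor card_left_ends_incident[OF bp] unfolding R_def by simp
  have "c * card R \<le> (\<Sum>y\<in>R. card {f \<in> set es. y \<in> f})"
    using poor sum_mono[of R "\<lambda>_. c"] by (simp add: mult.commute)
  also have "\<dots> \<le> r * card (set es)"
    using rg EE r unfolding R_def by (intro sum_card_incident_le) (auto simp: rgraph_def card_ge_0_finite)
  also have "\<dots> = r * length es" using de by (simp add: distinct_card)
  finally have "c * c \<le> r * length es" using \<open>c \<le> card R\<close> by (meson le_trans mult_le_mono2)
  then show False using few_edges unfolding c_def by (simp add: power2_eq_square)
qed

lemma longest_berge_path_rev: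
  "longest_berge_path E vs es \<Longrightarrow> longest_berge_path E (rev vs) (rev es)"
  by (simp add: longest_berge_path_def berge_path_rev)

lemma ex_longest_berge_path:
  assumes "berge_path E vs es" and bounded: "\<And>vs es. berge_path E vs es \<Longrightarrow> length es \<le> n"
  shows "\<exists>vs' es'. longest_berge_path E vs' es' \<and> length es \<le> length es'"
proof -
  define P where "P l \<longleftrightarrow> (\<exists>vs es. berge_path E vs es \<and> length es = l)" for l
  have P0: "P (length es)" using assms(1) unfolding P_def by blast
  have "\<forall>l. P l \<longrightarrow> l \<le> n" using bounded unfolding P_def by blast
  then obtain l where "P l" and greatest: "\<forall>l'. P l' \<longrightarrow> l' \<le> l"
    using Nat.ex_has_greatest_nat[where P = P, OF P0] by blast
  then obtain vs' es' where "berge_path E vs' es'" "length es' = l" unfolding P_def by blast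
  moreover have "length es \<le> l" using greatest P0 by blast
  moreover have "length es'' \<le> l" if "berge_path E vs'' es''" for vs'' es''
    using greatest that unfolding P_def by blast
  ultimately show ?thesis unfolding longest_berge_path_def by auto
qed

lemma berge_path_length_less:
  assumes "\<not> (\<exists>vs es. berge_path E vs es \<and> length es = k)" and "berge_path E vs es"
  shows "length es < k"
proof (rule ccontr)
  assume "\<not> length es < k"
  then have "berge_path E (take (Suc k) vs) (take k es)" "length (take k es) = k"
    using berge_path_take[OF assms(2), of k] by auto
  then show False using assms(1) by blast
qed

lemma ex_berge_path_single_edge:
  assumes rg: "rgraph r V E" and r: "2 \<le> r" and e: "e \<in> E"
  shows "\<exists>vs. berge_path E vs [e]"
proof -
  have "card e = r" using rg e by (simp add: rgraph_def)
  then have "e \<noteq> {}" using r by auto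
  then obtain v where "v \<in> e" by blast
  then have "card (e - {v}) = r - 1" using \<open>card e = r\<close> by simp
  then have "0 < card (e - {v})" using r by simp
  then have "e - {v} \<noteq> {}" by (metis card.empty less_irrefl)
  then obtain w where "w \<in> e" "w \<noteq> v" by blast
  then have "berge_path E [v, w] [e]" using e \<open>v \<in> e\<close> by (auto simp: berge_path_def less_Suc_eq)
  then show ?thesis by blast
qed

lemma longest_berge_path_rich_start:
  assumes rg: "rgraph r V E" and deg: "\<forall>v\<in>V. m choose (r - 1) \<le> hdegree E v"
    and lp: "longest_berge_path E vs es" and nonempty: "es \<noteq> []" and r: "2 \<le> r"
    and few_edges: "r * length es < ((m - 1) choose (r - 2))\<^sup>2"
  shows "\<exists>vs' es'. longest_berge_path E vs' es' \<and> set es' = set es \<and> length es' = length es \<and>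
           last vs' = last vs \<and> m \<le> card (hnbhd V (E - set es) (hd vs'))"
proof -
  have bp: "berge_path E vs es" using lp by (simp add: longest_berge_path_def)
  obtain i where i: "i < length es" "hd vs \<in> es ! i" "m \<le> card (hnbhd V (E - set es) (vs ! i))"
    using ex_rich_rotation_start[OF rg deg bp nonempty r few_edges] by blast
  obtain vs' es' where "berge_path E vs' es'" "set es' = set es" "length es' = length es"
    "hd vs' = vs ! i" "last vs' = last vs"
    using berge_path_rotate[OF bp i(1,2)] by blast
  then show ?thesis using lp i(3)
    by (intro exI[of _ vs'] exI[of _ es']) (auto simp: longest_berge_path_def)
qed

lemma longest_berge_path_rich_ends:
  assumes rg: "rgraph r V E" and deg: "\<forall>v\<in>V. m choose (r - 1) \<le> hdegree E v"
    and lp0: "longest_berge_path E vs0 es0" and "es0 \<noteq> []" and r: "2 \<le> r"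
    and few_edges: "r * length es0 < ((m - 1) choose (r - 2))\<^sup>2"
  shows "\<exists>vs es. longest_berge_path E vs es \<and>
           m \<le> card (hnbhd V (E - set es) (hd vs)) \<and> m \<le> card (hnbhd V (E - set es) (last vs))"
proof -
  obtain vs1 es1 where p1: "longest_berge_path E vs1 es1" "set es1 = set es0"
      "length es1 = length es0" "m \<le> card (hnbhd V (E - set es0) (hd vs1))"
    using longest_berge_path_rich_start[OF rg deg lp0 \<open>es0 \<noteq> []\<close> r few_edges] by auto
  have "rev es1 \<noteq> []" "r * length (rev es1) < ((m - 1) choose (r - 2))\<^sup>2"
    using p1(3) \<open>es0 \<noteq> []\<close> few_edges by auto
  then obtain vs2 es2 where p2: "longest_berge_path E vs2 es2" "set es2 = set (rev es1)"
      "last vs2 = last (rev vs1)" "m \<le> card (hnbhd V (E - set (rev es1)) (hd vs2))"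
    using longest_berge_path_rich_start[OF rg deg longest_berge_path_rev[OF p1(1)] _ r] by blast
  have "last (rev vs1) = hd vs1"
    using p1(1) by (auto simp: longest_berge_path_def berge_path_def last_rev)
  then show ?thesis using p1 p2 by (intro exI[of _ vs2] exI[of _ es2]) simp
qed

theorem claim1:
  fixes r k m :: nat and V :: "'a set" and E :: "'a set set"
  assumes "r \<ge> 3" and "k \<ge> 2 * r + 13" and "m = (k - 1) div 2"
    and "rgraph r V E" and "V \<noteq> {}"
    and "\<not> (\<exists>vs es. berge_path E vs es \<and> length es = k)"
    and "\<forall>v\<in>V. hdegree E v \<ge> m choose (r - 1)"
  shows "\<exists>vs es. longest_berge_path E vs es \<and>
           card (hnbhd V (E - set es) (hd vs)) \<ge> m \<and>
           card (hnbhd V (E - set es) (last vs)) \<ge> m"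
proof -
  note rg = assms(4) and deg = assms(7)
  have r: "2 \<le> r" using assms(1) by simp
  note short = berge_path_length_less[OF assms(6)]
  obtain v where "v \<in> V" using assms(5) by blast
  moreover have "0 < m choose (r - 1)" using assms(1-3) by simp
  ultimately have "0 < hdegree E v" using deg by (meson less_le_trans)
  then obtain e where "e \<in> E" by (auto simp: hdegree_def card_gt_0_iff)
  then obtain vs where "berge_path E vs [e]" using ex_berge_path_single_edge[OF rg r] by blast
  moreover have "length es \<le> k" if "berge_path E vs es" for vs es
    using short[OF that] by simp
  ultimately obtain vs0 es0 where lp0: "longest_berge_path E vs0 es0" and "length [e] \<le> length es0"
    using ex_longest_berge_path by blast
  then have "es0 \<noteq> []" by auto
  have "length es0 < k" using short[of vs0 es0] lp0 by (simp add: longest_berge_path_def)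
  then have "r * length es0 \<le> r * (2 * m + 1)" using assms(3) by (intro mult_le_mono2) linarith
  also have "\<dots> < ((m - 1) choose (r - 2))\<^sup>2" using assms(1-3) by (intro binomial_square_gt) auto
  finally have few_edges: "r * length es0 < ((m - 1) choose (r - 2))\<^sup>2" .
  show ?thesis using longest_berge_path_rich_ends[OF rg deg lp0 \<open>es0 \<noteq> []\<close> r few_edges] .
qed

end
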